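(* Let $f=\frac1n\sum_{i=1}^n f_i$ where $f:\mathbb{R}^d\to\mathbb{R}$ has $L$-Lipschitz gradient and infimum $f^{\mathrm{inf}}\in\mathbb{R}$, and each $f_i$ is differentiable, bounded from below by $f_i^{\mathrm{inf}}$, and satisfies $f_i(y)\le f_i(x)+\langle\nabla f_i(x),y-x\rangle+\frac{L_i}{2}\|y-x\|^2$ for all $x,y$. Let $\Delta^{\mathrm{inf}}=\frac1n\sum_{i=1}^n(f^{\mathrm{inf}}-f_i^{\mathrm{inf}})$ and $g(x)=\frac1n\sum_{i=1}^n v_i\nabla f_i(x)$. Then for all $x$, $\mathbb{E}\|g(x)\|^2\le 2A(f(x)-f^{\mathrm{inf}})+B\|\nabla f(x)\|^2+C$ holds with: (i) for sampling with replacement: $A=\max_i\frac{L_i}{\tau n q_i}$, $B=1-\frac1\tau$, $C=2A\Delta^{\mathrm{inf}}$; (ii) for independent sampling without replacement: $A=\max_i\frac{(1-p_i)L_i}{p_i n}$, $B=1$, $C=2A\Delta^{\mathrm{inf}}$; (iii) for $\tau$-nice sampling without replacement (with $n\ge 2$): $A=\frac{n-\tau}{\tau(n-1)}\max_i L_i$, $B=\frac{n(\tau-1)}{\tau(n-1)}$, $C=2A\Delta^{\mathrm{inf}}$.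
   Context: The random vector $v=(v_1,\dots,v_n)$ is generated in one of the following ways. Sampling with replacement: fix an integer $\tau\ge1$ and probabilities $q_1,\dots,q_n>0$ with $\sum_i q_i=1$; roll independently $\tau$ times a die that shows $i$ with probability $q_i$; let $S_i$ be the number of times $i$ shows up, and $v_i=S_i/(\tau q_i)$. Independent sampling without replacement: fix $p_1,\dots,p_n\in(0,1]$; form a random set $S\subseteq\{1,\dots,n\}$ containing each $i$ independently with probability $p_i$; set $v_i=\mathbf{1}_{i\in S}/p_i$. $\tau$-nice sampling without replacement: fix an integer $\tau\in[1,n]$; choose $S$ uniformly among all subsets of $\{1,\dots,n\}$ of size $\tau$; set $v_i=\mathbf{1}_{i\in S}/p_i$ with $p_i=\tau/n$. *)

theory Defs
  imports "HOL-Analysis.Analysis" "HOL-Library.FuncSet"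
begin

text \<open>Indices are 0-based: the functions are f 0, ..., f (n-1).
  The minibatch estimator g(x) = (1/n) sum_i v_i * grad f_i(x), for a fixed
  realisation of the vector v.\<close>

definition minibatch_grad :: "nat \<Rightarrow> (nat \<Rightarrow> real) \<Rightarrow> (nat \<Rightarrow> 'a::real_vector) \<Rightarrow> 'a" where
  "minibatch_grad n v G = (1 / real n) *\<^sub>R (\<Sum>i<n. v i *\<^sub>R G i)"

text \<open>Sampling with replacement: the outcome of tau independent rolls of the die
  is a map s : {..<tau} -> {..<n}, having probability prod_k q (s k).\<close>

definition wr_v :: "nat \<Rightarrow> (nat \<Rightarrow> real) \<Rightarrow> (nat \<Rightarrow> nat) \<Rightarrow> nat \<Rightarrow> real" where
  "wr_v \<tau> q s i = real (card {k\<in>{..<\<tau>}. s k = i}) / (real \<tau> * q i)"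

definition E_sq_with_replacement ::
  "nat \<Rightarrow> nat \<Rightarrow> (nat \<Rightarrow> real) \<Rightarrow> (nat \<Rightarrow> 'a::real_normed_vector) \<Rightarrow> real" where
  "E_sq_with_replacement n \<tau> q G =
     (\<Sum>s\<in>{..<\<tau>} \<rightarrow>\<^sub>E {..<n}. (\<Prod>k<\<tau>. q (s k)) * (norm (minibatch_grad n (wr_v \<tau> q s) G))\<^sup>2)"

definition E_sq_independent ::
  "nat \<Rightarrow> (nat \<Rightarrow> real) \<Rightarrow> (nat \<Rightarrow> 'a::real_normed_vector) \<Rightarrow> real" where
  "E_sq_independent n p G =
     (\<Sum>S\<in>Pow {..<n}. (\<Prod>i<n. if i \<in> S then p i else 1 - p i) *
        (norm (minibatch_grad n (\<lambda>i. (if i \<in> S then 1 else 0) / p i) G))\<^sup>2)"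

definition E_sq_nice ::
  "nat \<Rightarrow> nat \<Rightarrow> (nat \<Rightarrow> 'a::real_normed_vector) \<Rightarrow> real" where
  "E_sq_nice n \<tau> G =
     (\<Sum>S\<in>{S. S \<subseteq> {..<n} \<and> card S = \<tau>}. (1 / real (n choose \<tau>)) *
        (norm (minibatch_grad n (\<lambda>i. (if i \<in> S then 1 else 0) / (real \<tau> / real n)) G))\<^sup>2)"

end

theory Submission
  imports Defs
begin

(* For each of the three samplings the second moments of v have the form
   E[v_i v_j] = beta + [i = j] gamma_i, so that
   E |g(x)|^2 = beta |grad f(x)|^2 + n^-2 sum_i gamma_i |grad f_i(x)|^2.
   A gradient step of length 1/L_i from x, together with the lower bound f_i^inf,
   gives |grad f_i(x)|^2 <= 2 L_i (f_i(x) - f_i^inf).  Bounding gamma_i L_i / n by A and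
   averaging f_i(x) - f_i^inf = (f(x) - f^inf) + (f^inf - f_i^inf) over i yields the claim. *)

section \<open>Second moments of the minibatch estimator\<close>

lemma norm_sq_minibatch_grad:
  fixes a :: "nat \<Rightarrow> 'a::real_inner"
  shows "(norm (minibatch_grad n v a))\<^sup>2 = (\<Sum>i<n. \<Sum>j<n. v i * v j * (a i \<bullet> a j)) / (real n)\<^sup>2"
  unfolding minibatch_grad_def power2_norm_eq_inner
  by (simp add: inner_sum_left inner_sum_right sum_distrib_left sum_divide_distrib
      power2_eq_square mult_ac inner_commute)

lemma sum_norm_sq_minibatch_grad:
  fixes a :: "nat \<Rightarrow> 'a::real_inner"
  assumes moments: "\<And>i j. i < n \<Longrightarrow> j < n \<Longrightarrow>
      (\<Sum>\<omega>\<in>\<Omega>. w \<omega> * (v \<omega> i * v \<omega> j)) = \<beta> + (if i = j then \<gamma> i else 0)"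
  shows "(\<Sum>\<omega>\<in>\<Omega>. w \<omega> * (norm (minibatch_grad n (v \<omega>) a))\<^sup>2)
     = \<beta> * (norm (minibatch_grad n (\<lambda>_. 1) a))\<^sup>2 + (\<Sum>i<n. \<gamma> i * (norm (a i))\<^sup>2) / (real n)\<^sup>2"
proof -
  have "(\<Sum>\<omega>\<in>\<Omega>. w \<omega> * (\<Sum>i<n. \<Sum>j<n. v \<omega> i * v \<omega> j * (a i \<bullet> a j)))
      = (\<Sum>i<n. \<Sum>j<n. (\<Sum>\<omega>\<in>\<Omega>. w \<omega> * (v \<omega> i * v \<omega> j)) * (a i \<bullet> a j))"
    by (simp add: sum_distrib_left sum_distrib_right mult_ac sum.swap[where A = \<Omega>])
  also have "\<dots> = (\<Sum>i<n. \<Sum>j<n. \<beta> * (a i \<bullet> a j) + (if i = j then \<gamma> i * (a i \<bullet> a j) else 0))"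
    by (intro sum.cong refl) (simp add: moments distrib_right)
  also have "\<dots> = \<beta> * (\<Sum>i<n. \<Sum>j<n. a i \<bullet> a j) + (\<Sum>i<n. \<gamma> i * (norm (a i))\<^sup>2)"
    by (simp add: sum.distrib sum_distrib_left power2_norm_eq_inner)
  finally show ?thesis
    by (simp add: norm_sq_minibatch_grad sum_divide_distrib[symmetric] add_divide_distrib)
qed

lemma sum_norm_sq_minibatch_grad_le:
  fixes a :: "nat \<Rightarrow> 'a::real_inner"
  assumes moments: "\<And>i j. i < n \<Longrightarrow> j < n \<Longrightarrow>
      (\<Sum>\<omega>\<in>\<Omega>. w \<omega> * (v \<omega> i * v \<omega> j)) = \<beta> + (if i = j then \<gamma> i else 0)"
    and \<gamma>_nonneg: "\<And>i. i < n \<Longrightarrow> 0 \<le> \<gamma> i"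
    and \<gamma>_le: "\<And>i. i < n \<Longrightarrow> \<gamma> i * Li i / real n \<le> A"
    and a_le: "\<And>i. i < n \<Longrightarrow> (norm (a i))\<^sup>2 \<le> 2 * Li i * D i"
    and D_nonneg: "\<And>i. i < n \<Longrightarrow> 0 \<le> D i"
  shows "(\<Sum>\<omega>\<in>\<Omega>. w \<omega> * (norm (minibatch_grad n (v \<omega>) a))\<^sup>2)
     \<le> \<beta> * (norm (minibatch_grad n (\<lambda>_. 1) a))\<^sup>2 + 2 * A * (1 / real n * (\<Sum>i<n. D i))"
proof -
  have "\<gamma> i * (norm (a i))\<^sup>2 / (real n)\<^sup>2 \<le> 2 * A * (D i / real n)" if i: "i < n" for i
  proof -
    have "\<gamma> i * (norm (a i))\<^sup>2 / (real n)\<^sup>2 \<le> \<gamma> i * (2 * Li i * D i) / (real n)\<^sup>2"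
      using \<gamma>_nonneg[OF i] a_le[OF i] by (intro divide_right_mono mult_left_mono) auto
    also have "\<dots> = 2 * (\<gamma> i * Li i / real n) * (D i / real n)"
      by (simp add: power2_eq_square)
    also have "\<dots> \<le> 2 * A * (D i / real n)"
      using \<gamma>_le[OF i] D_nonneg[OF i] by (intro mult_right_mono) auto
    finally show ?thesis .
  qed
  then have "(\<Sum>i<n. \<gamma> i * (norm (a i))\<^sup>2) / (real n)\<^sup>2 \<le> (\<Sum>i<n. 2 * A * (D i / real n))"
    unfolding sum_divide_distrib by (intro sum_mono) auto
  then show ?thesis
    by (simp add: sum_norm_sq_minibatch_grad[OF moments] sum_distrib_left sum_divide_distrib)
qed

lemma gradient_average_eq_minibatch_grad:
  fixes F :: "nat \<Rightarrow> 'a::real_inner \<Rightarrow> real"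
  assumes "\<And>i. i < n \<Longrightarrow> (F i has_derivative (\<lambda>h. G i \<bullet> h)) (at x)"
    and "((\<lambda>x. 1 / real n * (\<Sum>i<n. F i x)) has_derivative (\<lambda>h. g \<bullet> h)) (at x)"
  shows "g = minibatch_grad n (\<lambda>_. 1) G"
proof -
  have "((\<lambda>x. 1 / real n * (\<Sum>i<n. F i x)) has_derivative (\<lambda>h. 1 / real n * (\<Sum>i<n. G i \<bullet> h))) (at x)"
    by (intro has_derivative_mult_right has_derivative_sum assms(1)) auto
  then have "(\<lambda>h. g \<bullet> h) = (\<lambda>h. 1 / real n * (\<Sum>i<n. G i \<bullet> h))"
    using assms(2) by (rule has_derivative_unique[rotated])
  then have "\<forall>h. h \<bullet> g = h \<bullet> minibatch_grad n (\<lambda>_. 1) G"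
    by (simp add: minibatch_grad_def inner_sum_right inner_sum_left inner_commute fun_eq_iff)
  then show ?thesis by (simp add: vector_eq_ldot)
qed

section \<open>Sampling with replacement\<close>

lemma sum_PiE_prod_indicator_pair:
  fixes q :: "nat \<Rightarrow> real"
    and \<tau> k l :: nat
  assumes q_sum: "(\<Sum>a<n. q a) = 1" and "i < n" "j < n" "k < \<tau>" "l < \<tau>"
  shows "(\<Sum>s\<in>{..<\<tau>} \<rightarrow>\<^sub>E {..<n}. (\<Prod>m<\<tau>. q (s m)) * (of_bool (s k = i) * of_bool (s l = j)))
       = (if k = l then of_bool (i = j) * q i else q i * q j)"
proof -
  define h where "h m a = q a * ((if m = k then of_bool (a = i) else 1) * (if m = l then of_bool (a = j) else 1))"
    for m a
  have h: "h m a = (if (m = k \<longrightarrow> a = i) \<and> (m = l \<longrightarrow> a = j) then q a else 0)" for m a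
    by (simp add: h_def)
  \<comment> \<open>The product measure factorizes over the rolls.\<close>
  have "(\<Sum>s\<in>{..<\<tau>} \<rightarrow>\<^sub>E {..<n}. (\<Prod>m<\<tau>. q (s m)) * (of_bool (s k = i) * of_bool (s l = j)))
      = (\<Sum>s\<in>{..<\<tau>} \<rightarrow>\<^sub>E {..<n}. \<Prod>m<\<tau>. h m (s m))"
  proof (intro sum.cong refl)
    fix s :: "nat \<Rightarrow> nat"
    have "(\<Prod>m<\<tau>. if m = k then of_bool (s m = i) else 1) = (of_bool (s k = i) :: real)"
      "(\<Prod>m<\<tau>. if m = l then of_bool (s m = j) else 1) = (of_bool (s l = j) :: real)"
      using assms by (simp_all add: prod.delta)
    then show "(\<Prod>m<\<tau>. q (s m)) * (of_bool (s k = i) * of_bool (s l = j)) = (\<Prod>m<\<tau>. h m (s m))"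
      unfolding h_def prod.distrib by simp
  qed
  also have "\<dots> = (\<Prod>m<\<tau>. \<Sum>a<n. h m a)"
    by (rule prod_sum_PiE[symmetric]) auto
  also have "\<dots> = (if k = l then of_bool (i = j) * q i else q i * q j)"
  proof (cases "k = l")
    case True
    have "(\<Sum>a<n. h m a) = (if m = k then of_bool (i = j) * q i else 1)" for m
      using True assms by (cases "m = k"; cases "i = j") (auto simp: h intro: sum.neutral)
    then show ?thesis using True assms by (simp add: prod.delta)
  next
    case False
    have "(\<Sum>a<n. h m a) = (if m = k then q i else 1) * (if m = l then q j else 1)" for m
      using False assms by (cases "m = k"; cases "m = l") (auto simp: h)
    then show ?thesis using False assms by (simp add: prod.distrib prod.delta)
  qed
  finally show ?thesis .
qed

lemma sum_lessThan_diagonal: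
  fixes X Y :: real
  shows "(\<Sum>k<t. \<Sum>l<t. if k = l then X else Y) = real t * X + (real t * real t - real t) * Y"
proof -
  have "(\<Sum>l<t. if k = l then X else Y) = (\<Sum>l<t. Y + (if k = l then X - Y else 0))" for k
    by (intro sum.cong) auto
  then show ?thesis by (simp add: sum.distrib algebra_simps)
qed

lemma with_replacement_second_moment:
  fixes q :: "nat \<Rightarrow> real"
  assumes \<tau>_pos: "\<tau> \<ge> 1" and q_pos: "\<forall>i<n. q i > 0" and q_sum: "(\<Sum>a<n. q a) = 1"
    and i: "i < n" and j: "j < n"
  shows "(\<Sum>s\<in>{..<\<tau>} \<rightarrow>\<^sub>E {..<n}. (\<Prod>k<\<tau>. q (s k)) * (wr_v \<tau> q s i * wr_v \<tau> q s j))
     = (1 - 1 / real \<tau>) + (if i = j then 1 / (real \<tau> * q i) else 0)" (is "?E = _")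
proof -
  define X where "X = of_bool (i = j) * q i"
  have qi: "q i > 0" and qj: "q j > 0" using q_pos i j by auto
  have v_eq: "wr_v \<tau> q s a = (\<Sum>k<\<tau>. of_bool (s k = a)) / (real \<tau> * q a)" for s a
    by (simp add: wr_v_def Int_def)
  have v_mult: "wr_v \<tau> q s i * wr_v \<tau> q s j
      = (\<Sum>k<\<tau>. \<Sum>l<\<tau>. of_bool (s k = i) * of_bool (s l = j)) / (real \<tau> * q i * (real \<tau> * q j))" for s
    unfolding v_eq times_divide_times_eq sum_product ..
  \<comment> \<open>The simp rules removed below would turn the indicator sums back into cardinalities.\<close>
  have "?E = (\<Sum>k<\<tau>. \<Sum>l<\<tau>. \<Sum>s\<in>{..<\<tau>} \<rightarrow>\<^sub>E {..<n}. (\<Prod>m<\<tau>. q (s m)) * (of_bool (s k = i) * of_bool (s l = j)))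
       / (real \<tau> * q i * (real \<tau> * q j))"
    unfolding v_mult
    by (simp add: sum_distrib_left sum_divide_distrib sum.swap[where A = "{..<\<tau>} \<rightarrow>\<^sub>E {..<n}"]
        del: sum_of_bool_eq sum_mult_of_bool_eq sum_of_bool_mult_eq)
  also have "\<dots> = (\<Sum>k<\<tau>. \<Sum>l<\<tau>. if k = l then X else q i * q j) / (real \<tau> * q i * (real \<tau> * q j))"
    unfolding X_def by (intro arg_cong2[where f = "(/)"] sum.cong refl sum_PiE_prod_indicator_pair q_sum i j) auto
  also have "\<dots> = (1 - 1 / real \<tau>) + (if i = j then 1 / (real \<tau> * q i) else 0)"
    using qi qj \<tau>_pos unfolding sum_lessThan_diagonal X_def
    by (cases "i = j") (simp_all add: field_simps)
  finally show ?thesis .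
qed

section \<open>Independent sampling without replacement\<close>

lemma independent_sampling_supset_prob:
  fixes p :: "'a \<Rightarrow> real"
  assumes A: "finite A" and K: "K \<subseteq> A"
  shows "(\<Sum>S\<in>Pow A. (\<Prod>k\<in>A. if k \<in> S then p k else 1 - p k) * of_bool (K \<subseteq> S)) = (\<Prod>k\<in>K. p k)"
proof -
  \<comment> \<open>Forcing \<open>k \<in> S\<close> for \<open>k \<in> K\<close> amounts to replacing \<open>1 - p k\<close> by \<open>0\<close>.\<close>
  define r where "r k = (if k \<in> K then 0 else 1 - p k)" for k
  have "(\<Prod>k\<in>A. if k \<in> S then p k else 1 - p k) * of_bool (K \<subseteq> S)
      = (\<Prod>k\<in>S. p k) * (\<Prod>k\<in>A - S. r k)" if S: "S \<subseteq> A" for S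
  proof -
    have split: "(\<Prod>k\<in>A. if k \<in> S then p k else 1 - p k) = (\<Prod>k\<in>S. p k) * (\<Prod>k\<in>A - S. 1 - p k)"
      using prod.If_cases[OF A, of "\<lambda>k. k \<in> S" p "\<lambda>k. 1 - p k"] S
      by (simp add: Int_absorb1 Diff_eq)
    show ?thesis
    proof (cases "K \<subseteq> S")
      case True
      then have "(\<Prod>k\<in>A - S. r k) = (\<Prod>k\<in>A - S. 1 - p k)"
        by (intro prod.cong) (auto simp: r_def)
      then show ?thesis using True split by simp
    next
      case False
      then obtain k where "k \<in> A - S" "k \<in> K" using K by auto
      then have "(\<Prod>k\<in>A - S. r k) = 0" using A by (auto simp: r_def prod_zero_iff)
      then show ?thesis using False by simp
    qed
  qed
  then have "(\<Sum>S\<in>Pow A. (\<Prod>k\<in>A. if k \<in> S then p k else 1 - p k) * of_bool (K \<subseteq> S))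
      = (\<Sum>S\<in>Pow A. (\<Prod>k\<in>S. p k) * (\<Prod>k\<in>A - S. r k))"
    by (intro sum.cong) auto
  also have "\<dots> = (\<Prod>k\<in>A. p k + r k)"
    by (rule prod_add[OF A, symmetric])
  also have "\<dots> = (\<Prod>k\<in>K. p k)"
    using A K by (intro prod.mono_neutral_cong_right) (auto simp: r_def)
  finally show ?thesis .
qed

lemma independent_sampling_second_moment:
  fixes p :: "nat \<Rightarrow> real"
  assumes p: "\<forall>i<n. 0 < p i \<and> p i \<le> 1" and i: "i < n" and j: "j < n"
  shows "(\<Sum>S\<in>Pow {..<n}. (\<Prod>k<n. if k \<in> S then p k else 1 - p k) *
           ((if i \<in> S then 1 else 0) / p i * ((if j \<in> S then 1 else 0) / p j)))
         = 1 + (if i = j then 1 / p i - 1 else 0)" (is "?E = _")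
proof -
  have "?E = (\<Sum>S\<in>Pow {..<n}. (\<Prod>k<n. if k \<in> S then p k else 1 - p k) * of_bool ({i, j} \<subseteq> S))
        / (p i * p j)"
    unfolding sum_divide_distrib by (intro sum.cong refl) auto
  also have "\<dots> = (\<Prod>k\<in>{i, j}. p k) / (p i * p j)"
    using i j by (subst independent_sampling_supset_prob) auto
  also have "\<dots> = 1 + (if i = j then 1 / p i - 1 else 0)"
    using p i j by (cases "i = j") (auto simp: field_simps power2_eq_square)
  finally show ?thesis .
qed

section \<open>\<open>\<tau>\<close>-nice sampling\<close>

lemma n_subsets_supset:
  assumes A: "finite A" and K: "K \<subseteq> A" and "card K \<le> k"
  shows "card {S. S \<subseteq> A \<and> card S = k \<and> K \<subseteq> S} = (card A - card K) choose (k - card K)"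
proof -
  have K_fin: "finite K" using K A finite_subset by blast
  have "{S. S \<subseteq> A \<and> card S = k \<and> K \<subseteq> S} = (\<lambda>T. T \<union> K) ` {T. T \<subseteq> A - K \<and> card T = k - card K}"
  proof (intro set_eqI iffI)
    fix S assume "S \<in> {S. S \<subseteq> A \<and> card S = k \<and> K \<subseteq> S}"
    then have S: "S \<subseteq> A" "card S = k" "K \<subseteq> S" by auto
    then have "card (S - K) = k - card K" using K_fin by (simp add: card_Diff_subset)
    then show "S \<in> (\<lambda>T. T \<union> K) ` {T. T \<subseteq> A - K \<and> card T = k - card K}"
      using S by (intro image_eqI[of _ _ "S - K"]) auto
  next
    fix S assume "S \<in> (\<lambda>T. T \<union> K) ` {T. T \<subseteq> A - K \<and> card T = k - card K}"
    then obtain T where T: "T \<subseteq> A - K" "card T = k - card K" and S: "S = T \<union> K" by auto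
    have "card S = card T + card K"
      unfolding S using T A K_fin by (intro card_Un_disjoint) (auto intro: finite_subset)
    then show "S \<in> {S. S \<subseteq> A \<and> card S = k \<and> K \<subseteq> S}" using S T K assms(3) by auto
  qed
  also have "card \<dots> = card {T. T \<subseteq> A - K \<and> card T = k - card K}"
    by (intro card_image inj_onI) blast
  also have "\<dots> = (card A - card K) choose (k - card K)"
    using A K K_fin by (simp add: n_subsets card_Diff_subset)
  finally show ?thesis .
qed

lemma n_subsets_supset_mult_choose:
  assumes A: "finite A" and K: "K \<subseteq> A" and k: "k \<le> card A"
  shows "card {S. S \<subseteq> A \<and> card S = k \<and> K \<subseteq> S} * (card A choose card K)
       = (card A choose k) * (k choose card K)"
proof (cases "card K \<le> k")
  case True
  then show ?thesis
    using n_subsets_supset[OF A K True] choose_mult[OF True k] by simp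
next
  case False
  have no_supsets: "{S. S \<subseteq> A \<and> card S = k \<and> K \<subseteq> S} = {}"
    using False A by (auto dest: card_mono[OF finite_subset])
  show ?thesis unfolding no_supsets using False by simp
qed

lemma real_choose_two: "real (m choose 2) = real m * (real m - 1) / 2"
proof -
  have "2 * (m choose 2) = m * (m - 1)"
    using binomial_absorption[of 1 m] by (simp add: numeral_2_eq_2)
  then have "2 * real (m choose 2) = real m * real (m - 1)"
    by (metis of_nat_mult of_nat_numeral)
  then show ?thesis by (cases m) auto
qed

lemma nice_sampling_second_moment:
  assumes n: "n \<ge> 2" and \<tau>: "1 \<le> \<tau>" "\<tau> \<le> n" and i: "i < n" and j: "j < n"
  shows "(\<Sum>S\<in>{S. S \<subseteq> {..<n} \<and> card S = \<tau>}. (1 / real (n choose \<tau>)) *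
      ((if i \<in> S then 1 else 0) / (real \<tau> / real n) * ((if j \<in> S then 1 else 0) / (real \<tau> / real n))))
    = real n * (real \<tau> - 1) / (real \<tau> * (real n - 1))
      + (if i = j then real n * (real n - real \<tau>) / (real \<tau> * (real n - 1)) else 0)"
    (is "?E = _")
proof -
  define N where "N = card {S. S \<subseteq> {..<n} \<and> card S = \<tau> \<and> {i, j} \<subseteq> S}"
  have C_pos: "real (n choose \<tau>) > 0" using \<tau> by simp
  have fin: "finite {S. S \<subseteq> {..<n} \<and> card S = \<tau>}"
    by (rule finite_subset[of _ "Pow {..<n}"]) auto
  have "?E = (\<Sum>S\<in>{S. S \<subseteq> {..<n} \<and> card S = \<tau>}.
      (real n / real \<tau>)\<^sup>2 / real (n choose \<tau>) * of_bool ({i, j} \<subseteq> S))"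
    by (intro sum.cong refl) (auto simp: power2_eq_square)
  also have "\<dots> = (real n / real \<tau>)\<^sup>2 * real N / real (n choose \<tau>)"
    unfolding sum_distrib_left[symmetric] using fin by (simp add: N_def Int_def conj_assoc)
  finally have sum_eq: "?E = (real n / real \<tau>)\<^sup>2 * real N / real (n choose \<tau>)" .
  have count: "real N * real (n choose card {i, j}) = real (n choose \<tau>) * real (\<tau> choose card {i, j})"
    using n_subsets_supset_mult_choose[of "{..<n}" "{i, j}" \<tau>] i j \<tau> unfolding N_def of_nat_mult[symmetric]
    by simp
  have "real n - 1 > 0" "real \<tau> > 0" using n \<tau> by auto
  show ?thesis
  proof (cases "i = j")
    case True
    then have "real N = real (n choose \<tau>) * real \<tau> / real n"
      using count n by (simp add: field_simps)
    then have "(real n / real \<tau>)\<^sup>2 * real N / real (n choose \<tau>) = real n / real \<tau>"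
      using C_pos n \<open>real \<tau> > 0\<close> by (simp add: power2_eq_square)
    moreover have "real n * (real \<tau> - 1) / (real \<tau> * (real n - 1))
        + real n * (real n - real \<tau>) / (real \<tau> * (real n - 1)) = real n / real \<tau>"
    proof -
      have "real n * (real \<tau> - 1) + real n * (real n - real \<tau>) = real n * (real n - 1)"
        by (simp add: algebra_simps)
      then show ?thesis
        using \<open>real n - 1 > 0\<close> by (simp add: add_divide_distrib[symmetric])
    qed
    ultimately show ?thesis unfolding sum_eq using True by simp
  next
    case False
    then have "card {i, j} = 2" by simp
    then have pairs: "real N * (real n * (real n - 1)) = real (n choose \<tau>) * (real \<tau> * (real \<tau> - 1))"
      using count[unfolded \<open>card {i, j} = 2\<close> real_choose_two] by (simp add: field_simps)
    have "(real n / real \<tau>)\<^sup>2 * real N / real (n choose \<tau>)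
        = (real n / real \<tau>)\<^sup>2 * (real N * (real n * (real n - 1))) / (real (n choose \<tau>) * (real n * (real n - 1)))"
      using n \<open>real n - 1 > 0\<close> by simp
    also have "\<dots> = real n * (real \<tau> - 1) / (real \<tau> * (real n - 1))"
      unfolding pairs using C_pos n \<open>real n - 1 > 0\<close> \<open>real \<tau> > 0\<close>
      by (simp add: field_simps power2_eq_square)
    finally show ?thesis unfolding sum_eq using False by simp
  qed
qed

lemma E_sq_with_replacement_le:
  fixes a :: "nat \<Rightarrow> 'a::real_inner"
  assumes "\<tau> \<ge> 1" and "\<forall>i<n. q i > 0" and "(\<Sum>i<n. q i) = 1"
    and a_le: "\<And>i. i < n \<Longrightarrow> (norm (a i))\<^sup>2 \<le> 2 * Li i * D i"
    and D_nonneg: "\<And>i. i < n \<Longrightarrow> 0 \<le> D i"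
  shows "E_sq_with_replacement n \<tau> q a
    \<le> (1 - 1 / real \<tau>) * (norm (minibatch_grad n (\<lambda>_. 1) a))\<^sup>2
      + 2 * Max ((\<lambda>i. Li i / (real \<tau> * real n * q i)) ` {..<n}) * (1 / real n * (\<Sum>i<n. D i))"
proof -
  have \<gamma>_le: "1 / (real \<tau> * q i) * Li i / real n \<le> Max ((\<lambda>i. Li i / (real \<tau> * real n * q i)) ` {..<n})"
    if "i < n" for i
    using that by (simp add: field_simps Max_ge)
  show ?thesis
    unfolding E_sq_with_replacement_def using assms
    by (intro sum_norm_sq_minibatch_grad_le[OF with_replacement_second_moment _ \<gamma>_le a_le D_nonneg])
      (auto simp: less_imp_le)
qed

lemma E_sq_independent_le:
  fixes a :: "nat \<Rightarrow> 'a::real_inner"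
  assumes p: "\<forall>i<n. 0 < p i \<and> p i \<le> 1"
    and a_le: "\<And>i. i < n \<Longrightarrow> (norm (a i))\<^sup>2 \<le> 2 * Li i * D i"
    and D_nonneg: "\<And>i. i < n \<Longrightarrow> 0 \<le> D i"
  shows "E_sq_independent n p a
    \<le> 1 * (norm (minibatch_grad n (\<lambda>_. 1) a))\<^sup>2
      + 2 * Max ((\<lambda>i. (1 - p i) * Li i / (p i * real n)) ` {..<n}) * (1 / real n * (\<Sum>i<n. D i))"
proof -
  have \<gamma>_le: "(1 / p i - 1) * Li i / real n \<le> Max ((\<lambda>i. (1 - p i) * Li i / (p i * real n)) ` {..<n})"
    if "i < n" for i
  proof -
    have "(1 / p i - 1) * Li i / real n = (1 - p i) * Li i / (p i * real n)"
      using p[rule_format, OF that] by (simp add: field_simps)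
    then show ?thesis using that by (simp add: Max_ge)
  qed
  show ?thesis
    unfolding E_sq_independent_def using p
    by (intro sum_norm_sq_minibatch_grad_le[OF independent_sampling_second_moment _ \<gamma>_le a_le D_nonneg])
      auto
qed

lemma E_sq_nice_le:
  fixes a :: "nat \<Rightarrow> 'a::real_inner"
  assumes n: "n \<ge> 2" and \<tau>: "1 \<le> \<tau>" "\<tau> \<le> n"
    and a_le: "\<And>i. i < n \<Longrightarrow> (norm (a i))\<^sup>2 \<le> 2 * Li i * D i"
    and D_nonneg: "\<And>i. i < n \<Longrightarrow> 0 \<le> D i"
  shows "E_sq_nice n \<tau> a
    \<le> real n * (real \<tau> - 1) / (real \<tau> * (real n - 1)) * (norm (minibatch_grad n (\<lambda>_. 1) a))\<^sup>2
      + 2 * ((real n - real \<tau>) / (real \<tau> * (real n - 1)) * Max (Li ` {..<n})) * (1 / real n * (\<Sum>i<n. D i))"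
proof -
  have c_nonneg: "0 \<le> (real n - real \<tau>) / (real \<tau> * (real n - 1))" using n \<tau> by simp
  have \<gamma>_le: "real n * (real n - real \<tau>) / (real \<tau> * (real n - 1)) * Li i / real n
      \<le> (real n - real \<tau>) / (real \<tau> * (real n - 1)) * Max (Li ` {..<n})" if "i < n" for i
    using that n mult_left_mono[OF Max_ge c_nonneg] by simp
  show ?thesis
    unfolding E_sq_nice_def using n \<tau> c_nonneg
    by (intro sum_norm_sq_minibatch_grad_le[OF nice_sampling_second_moment _ \<gamma>_le a_le D_nonneg])
      (auto simp: zero_le_mult_iff)
qed

section \<open>Smooth functions bounded below\<close>

lemma upper_quadratic_bound_coeff_nonneg:
  fixes F :: "'a::euclidean_space \<Rightarrow> real"
  assumes lower: "\<And>y. m \<le> F y"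
    and upper: "\<And>y. F y \<le> F x + g \<bullet> (y - x) + L / 2 * (norm (y - x))\<^sup>2"
  shows "0 \<le> L"
proof (rule ccontr)
  assume "\<not> 0 \<le> L"
  then have L_neg: "L < 0" by simp
  obtain b :: 'a where b: "b \<in> Basis" using nonempty_Basis by blast
  \<comment> \<open>Testing at \<open>x + s b\<close> and \<open>x - s b\<close> cancels the linear term.\<close>
  have "m \<le> F x + L / 2 * s\<^sup>2" for s
    using lower[of "x + s *\<^sub>R b"] upper[of "x + s *\<^sub>R b"]
      lower[of "x - s *\<^sub>R b"] upper[of "x - s *\<^sub>R b"] b
    by simp
  also have "F x + L / 2 * (sqrt (2 * (F x - m + 1) / - L))\<^sup>2 = m - 1"
    using lower[of x] L_neg by (simp add: divide_nonneg_neg field_simps)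
  finally show False by simp
qed

lemma norm_sq_le_of_upper_quadratic_bound:
  fixes F :: "'a::euclidean_space \<Rightarrow> real"
  assumes lower: "\<And>y. m \<le> F y"
    and upper: "\<And>y. F y \<le> F x + g \<bullet> (y - x) + L / 2 * (norm (y - x))\<^sup>2"
  shows "(norm g)\<^sup>2 \<le> 2 * L * (F x - m)"
proof (cases "L = 0")
  case True
  have "g = 0"
  proof (rule ccontr)
    assume "g \<noteq> 0"
    define t where "t = (F x - m + 1) / (norm g)\<^sup>2"
    have "m \<le> F x - t * (norm g)\<^sup>2"
      using lower[of "x - t *\<^sub>R g"] upper[of "x - t *\<^sub>R g"] True by (simp add: power2_norm_eq_inner)
    also have "\<dots> = m - 1" using \<open>g \<noteq> 0\<close> unfolding t_def by simp
    finally show False by simp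
  qed
  then show ?thesis using True by simp
next
  case False
  then have L_pos: "L > 0" using upper_quadratic_bound_coeff_nonneg[OF lower upper] by simp
  have "m \<le> F x + g \<bullet> (- ((1 / L) *\<^sub>R g)) + L / 2 * (norm (- ((1 / L) *\<^sub>R g)))\<^sup>2"
    using lower[of "x - (1 / L) *\<^sub>R g"] upper[of "x - (1 / L) *\<^sub>R g"] by simp
  also have "\<dots> = F x - (norm g)\<^sup>2 / (2 * L)"
    using L_pos by (simp add: dot_square_norm power2_eq_square field_simps)
  finally show ?thesis using L_pos by (simp add: field_simps)
qed

theorem proposition3:
  fixes n :: nat
    and fi :: "nat \<Rightarrow> 'a::euclidean_space \<Rightarrow> real"
    and Dfi :: "nat \<Rightarrow> 'a \<Rightarrow> 'a"
    and Df :: "'a \<Rightarrow> 'a"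
    and L :: real and Li :: "nat \<Rightarrow> real"
    and finf :: real and fiinf :: "nat \<Rightarrow> real"
    and f :: "'a \<Rightarrow> real" and \<Delta>inf :: real
  assumes n_pos: "n \<ge> 1"
    and f_def: "f = (\<lambda>x. (1 / real n) * (\<Sum>i<n. fi i x))"
    and f_grad: "\<And>x. (f has_derivative (\<lambda>h. Df x \<bullet> h)) (at x)"
    and f_lip: "L-lipschitz_on UNIV Df"
    and f_bdd: "bdd_below (range f)"
    and finf_def: "finf = (INF x. f x)"
    and fi_grad: "\<And>i x. i < n \<Longrightarrow> (fi i has_derivative (\<lambda>h. Dfi i x \<bullet> h)) (at x)"
    and fi_lb: "\<And>i x. i < n \<Longrightarrow> fiinf i \<le> fi i x"
    and fi_smooth: "\<And>i x y. i < n \<Longrightarrow>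
        fi i y \<le> fi i x + Dfi i x \<bullet> (y - x) + Li i / 2 * (norm (y - x))\<^sup>2"
    and Delta_def: "\<Delta>inf = (1 / real n) * (\<Sum>i<n. finf - fiinf i)"
  shows
    "(\<forall>(\<tau>::nat) (q::nat \<Rightarrow> real). \<tau> \<ge> 1 \<and> (\<forall>i<n. q i > 0) \<and> (\<Sum>i<n. q i) = 1 \<longrightarrow>
       (let A = Max ((\<lambda>i. Li i / (real \<tau> * real n * q i)) ` {..<n});
            B = 1 - 1 / real \<tau>;
            C = 2 * A * \<Delta>inf
        in \<forall>x. E_sq_with_replacement n \<tau> q (\<lambda>i. Dfi i x)
               \<le> 2 * A * (f x - finf) + B * (norm (Df x))\<^sup>2 + C))
   \<and> (\<forall>p::nat \<Rightarrow> real. (\<forall>i<n. 0 < p i \<and> p i \<le> 1) \<longrightarrow>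
       (let A = Max ((\<lambda>i. (1 - p i) * Li i / (p i * real n)) ` {..<n});
            B = 1;
            C = 2 * A * \<Delta>inf
        in \<forall>x. E_sq_independent n p (\<lambda>i. Dfi i x)
               \<le> 2 * A * (f x - finf) + B * (norm (Df x))\<^sup>2 + C))
   \<and> (\<forall>\<tau>::nat. n \<ge> 2 \<and> 1 \<le> \<tau> \<and> \<tau> \<le> n \<longrightarrow>
       (let A = (real n - real \<tau>) / (real \<tau> * (real n - 1)) * Max (Li ` {..<n});
            B = real n * (real \<tau> - 1) / (real \<tau> * (real n - 1));
            C = 2 * A * \<Delta>inf
        in \<forall>x. E_sq_nice n \<tau> (\<lambda>i. Dfi i x)
               \<le> 2 * A * (f x - finf) + B * (norm (Df x))\<^sup>2 + C))"
proof -
  have grad: "Df x = minibatch_grad n (\<lambda>_. 1) (\<lambda>i. Dfi i x)" for x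
    using fi_grad f_grad[unfolded f_def] by (rule gradient_average_eq_minibatch_grad)
  have grad_le: "(norm (Dfi i x))\<^sup>2 \<le> 2 * Li i * (fi i x - fiinf i)" if "i < n" for i x
    by (rule norm_sq_le_of_upper_quadratic_bound[OF fi_lb[OF that] fi_smooth[OF that]])
  have mean_gap: "1 / real n * (\<Sum>i<n. fi i x - fiinf i) = f x - finf + \<Delta>inf" for x
    using n_pos unfolding f_def Delta_def by (simp add: sum_subtractf field_simps)
  have regroup: "2 * A * F + B * N + 2 * A * \<Delta> = B * N + 2 * A * (F + \<Delta>)" for A B N F \<Delta> :: real
    by algebra
  show ?thesis
    unfolding Let_def regroup mean_gap[symmetric] grad
    by (intro conjI allI impI; (elim conjE)?;
        rule E_sq_with_replacement_le E_sq_independent_le E_sq_nice_le; simp add: grad_le fi_lb)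
qed

end
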